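(* For every mapping $l$: if $\mathrm{WFMap}(l)$ then $\textsc{UpshiftAll}(\textsc{DownshiftAll}(l))=l$.
   Context: Expressions: $e ::= \lambda.\,e\mid(e\ e)\mid\$i\mid\&i\mid t$ with de Bruijn indices $\$i$ ($i\in\mathbb{N}$), overshifted markers $\&i$ ($i\in\mathbb{Z}$) and primitives $t$. Downshift: $\downarrow_d(\lambda.b)=\lambda.\downarrow_{d+1}b$; $\downarrow_d(f\ x)=(\downarrow_d f)(\downarrow_d x)$; $\downarrow_d\$i=\$i$ if $i<d$, $\$(i-1)$ if $i>d$, $\&(i-1)$ if $i=d$; $\downarrow_d\&i=\&(i-1)$; $\downarrow_d t=t$. Upshift: $\uparrow_d(\lambda.b)=\lambda.\uparrow_{d+1}b$; $\uparrow_d(f\ x)=(\uparrow_d f)(\uparrow_d x)$; $\uparrow_d\$i=\$i$ if $i<d$, $\$(i+1)$ if $i\ge d$; $\uparrow_d\&i=\&(i+1)$ if $i+1\ne d$, $\$(i+1)$ if $i+1=d$; $\uparrow_d t=t$. A mapping is a finite map from abstraction variables $\alpha$ and holes $??_j$ to expressions. $\textsc{DownshiftAll}(l)$ (resp. $\textsc{UpshiftAll}(l)$) is the mapping with the same keys obtained by applying $\downarrow_0$ (resp. $\uparrow_0$) to every bound expression. Well-formedness: $\mathrm{WF}_d(\lambda.b)=\mathrm{WF}_{d+1}(b)$; $\mathrm{WF}_d(f\ x)=\mathrm{WF}_d(f)\wedge\mathrm{WF}_d(x)$; $\mathrm{WF}_d(\$i)$ true; $\mathrm{WF}_d(\&i)$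 true iff $i<d$; $\mathrm{WF}_d(t)$ true. $\mathrm{WFMap}(l)$ means every expression in the range of $l$ satisfies $\mathrm{WF}_0$. *)

theory Defs
  imports Main
begin

text \<open>Expressions: lambda, application, de Bruijn index Var i (i :: nat),
  overshifted marker Over i (i :: int), primitive Prim t.\<close>
datatype 'p expr =
    Lam "'p expr"
  | App "'p expr" "'p expr"
  | Var nat
  | Over int
  | Prim 'p

fun downshift :: "nat \<Rightarrow> 'p expr \<Rightarrow> 'p expr" where
  "downshift d (Lam b) = Lam (downshift (Suc d) b)"
| "downshift d (App f x) = App (downshift d f) (downshift d x)"
| "downshift d (Var i) =
     (if i < d then Var i else if i > d then Var (i - 1) else Over (int i - 1))"
| "downshift d (Over i) = Over (i - 1)"
| "downshift d (Prim t) = Prim t"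

fun upshift :: "nat \<Rightarrow> 'p expr \<Rightarrow> 'p expr" where
  "upshift d (Lam b) = Lam (upshift (Suc d) b)"
| "upshift d (App f x) = App (upshift d f) (upshift d x)"
| "upshift d (Var i) = (if i < d then Var i else Var (i + 1))"
| "upshift d (Over i) = (if i + 1 \<noteq> int d then Over (i + 1) else Var (nat (i + 1)))"
| "upshift d (Prim t) = Prim t"

fun WF :: "nat \<Rightarrow> 'p expr \<Rightarrow> bool" where
  "WF d (Lam b) = WF (Suc d) b"
| "WF d (App f x) = (WF d f \<and> WF d x)"
| "WF d (Var i) = True"
| "WF d (Over i) = (i < int d)"
| "WF d (Prim t) = True"

datatype 'a key = AbsVar 'a | Hole nat

type_synonym ('a, 'p) mapping = "'a key \<rightharpoonup> 'p expr"

definition is_mapping :: "('a, 'p) mapping \<Rightarrow> bool" where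
  "is_mapping l \<longleftrightarrow> finite (dom l)"

definition DownshiftAll :: "('a, 'p) mapping \<Rightarrow> ('a, 'p) mapping" where
  "DownshiftAll l = (\<lambda>k. map_option (downshift 0) (l k))"

definition UpshiftAll :: "('a, 'p) mapping \<Rightarrow> ('a, 'p) mapping" where
  "UpshiftAll l = (\<lambda>k. map_option (upshift 0) (l k))"

definition WFMap :: "('a, 'p) mapping \<Rightarrow> bool" where
  "WFMap l \<longleftrightarrow> (\<forall>e \<in> ran l. WF 0 e)"

end

theory Submission
  imports Defs
begin

text \<open>Without \<open>WF d\<close> this fails: \<open>downshift d\<close> sends both \<open>Var d\<close> and \<open>Over d\<close> to
  \<open>Over (d - 1)\<close>, which \<open>upshift d\<close> turns back into \<open>Var d\<close>.\<close>
lemma upshift_downshift: "WF d e \<Longrightarrow> upshift d (downshift d e) = e"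
  by (induction e arbitrary: d) auto

theorem lemmaB5:
  fixes l :: "('a, 'p) mapping"
  assumes "is_mapping l"
    and "WFMap l"
  shows "UpshiftAll (DownshiftAll l) = l"
proof
  fix k
  have "WF 0 e" if "l k = Some e" for e
    using assms(2) that by (auto simp: WFMap_def intro: ranI)
  then show "UpshiftAll (DownshiftAll l) k = l k"
    by (cases "l k") (simp_all add: UpshiftAll_def DownshiftAll_def upshift_downshift)
qed

end
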